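(* Let $\theta \in [0,1] \setminus \mathbb{Q}$ and let $m, n \in \mathbb{Z}$ with $0 < m < n$. Define $h, k \colon (S^1)^3 \to (S^1)^3$ by \[ h(\zeta_1, \zeta_2, \zeta_3) = \big(e^{2\pi i\theta}\zeta_1,\ \zeta_1^m\zeta_2,\ \zeta_2^n\zeta_3\big), \qquad k(\zeta_1, \zeta_2, \zeta_3) = \big(e^{2\pi i\theta}\zeta_1,\ \zeta_1^n\zeta_2,\ \zeta_2^m\zeta_3\big). \] Then $h$ and $k$ are not flip conjugate, that is, there is no homeomorphism $g$ of $(S^1)^3$ with $g \circ h \circ g^{-1} = k$ or $g \circ h \circ g^{-1} = k^{-1}$.
   Context: Flip conjugacy: homeomorphisms $h_1 \colon X_1 \to X_1$ and $h_2 \colon X_2 \to X_2$ are conjugate if there is a homeomorphism $g \colon X_1 \to X_2$ with $g \circ h_1 \circ g^{-1} = h_2$. They are flip conjugate if $h_1$ is conjugate to $h_2$ or to $h_2^{-1}$. *)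

theory Defs
  imports "HOL-Analysis.Analysis"
begin

definition torus3 :: "(complex \<times> complex \<times> complex) set" where
  "torus3 = {(z1, z2, z3). cmod z1 = 1 \<and> cmod z2 = 1 \<and> cmod z3 = 1}"

definition conjugate_on :: "'a::topological_space set \<Rightarrow> ('a \<Rightarrow> 'a) \<Rightarrow>
    'b::topological_space set \<Rightarrow> ('b \<Rightarrow> 'b) \<Rightarrow> bool" where
  "conjugate_on X1 h1 X2 h2 \<longleftrightarrow>
     (\<exists>g g'. homeomorphism X1 X2 g g' \<and> (\<forall>y\<in>X2. g (h1 (g' y)) = h2 y))"

definition flip_conjugate_on :: "'a::topological_space set \<Rightarrow> ('a \<Rightarrow> 'a) \<Rightarrow>
    'b::topological_space set \<Rightarrow> ('b \<Rightarrow> 'b) \<Rightarrow> bool" where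
  "flip_conjugate_on X1 h1 X2 h2 \<longleftrightarrow>
     conjugate_on X1 h1 X2 h2 \<or> conjugate_on X1 h1 X2 (inv_into X2 h2)"

definition skew3 :: "real \<Rightarrow> int \<Rightarrow> int \<Rightarrow> complex \<times> complex \<times> complex \<Rightarrow> complex \<times> complex \<times> complex" where
  "skew3 \<theta> a b = (\<lambda>(z1, z2, z3). (exp (2 * pi * \<i> * complex_of_real \<theta>) * z1, z1 powi a * z2, z2 powi b * z3))"

end

theory Submission
  imports Defs
begin

text \<open>
  A continuous map \<open>u\<close> from the torus to \<open>\<complex> - {0}\<close> is a character \<open>z1^a z2^b z3^c\<close> times
  \<open>exp f\<close> with \<open>f\<close> continuous: a logarithm of the lift of \<open>u\<close> to \<open>\<real>^3\<close> changes by \<open>2\<pi>i\<close> times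
  integers \<open>a, b, c\<close> under the three periods, and subtracting the linear function with these slopes
  leaves a periodic function, which descends to the torus. The vector \<open>(a, b, c)\<close>, the class of \<open>u\<close>
  in \<open>H^1(T^3) = \<int>^3\<close>, is unique, because a nontrivial power has no continuous logarithm on a
  circle. Pulling back characters, every continuous self-map of the torus therefore acts on \<open>\<int>^3\<close> by
  an integer matrix, functorially, and a homeomorphism by an invertible one.
  The skew products \<open>h\<close> and \<open>k\<close> act by unipotent matrices \<open>H\<close> and \<open>K\<close> with off-diagonal entries
  \<open>(m, n)\<close> and \<open>(n, m)\<close>. A conjugacy \<open>g\<close> yields \<open>G H = K G\<close> and a conjugacy to \<open>k\<^sup>-\<^sup>1\<close> yields
  \<open>K G H = G\<close>; comparing entries, \<open>G\<close> is triangular, hence has diagonal entries \<open>\<plusminus>1\<close>, and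
  \<open>m G\<^sub>2\<^sub>2 = \<plusminus>n G\<^sub>1\<^sub>1\<close> forces \<open>m = n\<close>.
\<close>

section \<open>Continuous logarithms and periodic functions\<close>

lemma continuous_exp_eq_1_imp_constant_on:
  fixes f :: "'a::topological_space \<Rightarrow> complex"
  assumes "connected S" "continuous_on S f" "\<And>x. x \<in> S \<Longrightarrow> exp (f x) = 1"
  shows "f constant_on S"
proof (rule continuous_discrete_range_constant[OF assms(1,2)])
  fix x assume x: "x \<in> S"
  show "\<exists>e>0. \<forall>y. y \<in> S \<and> f y \<noteq> f x \<longrightarrow> e \<le> norm (f y - f x)"
  proof (intro exI[of _ "2*pi"] conjI allI impI)
    fix y assume y: "y \<in> S \<and> f y \<noteq> f x"
    have "exp (f y) = exp (f x)"
      using assms(3) x y by simp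
    then obtain k :: int where k: "f y - f x = of_int (2 * k) * pi * \<i>"
      by (auto simp: exp_eq)
    with y have "k \<noteq> 0" by auto
    then have "2 * pi \<le> 2 * pi * \<bar>real_of_int k\<bar>" by simp
    also have "\<dots> = norm (f y - f x)"
      by (simp add: k norm_mult)
    finally show "2 * pi \<le> norm (f y - f x)" .
  qed simp
qed

lemma exp_periodic_imp_shift_integer:
  fixes F :: "'a::real_normed_vector \<Rightarrow> complex"
  assumes "continuous_on UNIV F" "\<And>t. exp (F (t + p)) = exp (F t)"
  obtains k :: int where "\<And>t. F (t + p) = F t + 2 * pi * \<i> * of_int k"
proof -
  define D where "D t = F (t + p) - F t" for t
  have "continuous_on UNIV D"
    unfolding D_def by (intro continuous_intros continuous_on_compose2[OF assms(1)]) auto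
  moreover have exp_D: "exp (D t) = 1" for t
    using assms(2)[of t] by (simp add: D_def exp_diff)
  ultimately have "D constant_on UNIV"
    by (intro continuous_exp_eq_1_imp_constant_on) auto
  then have "D t = D 0" for t
    by (auto simp: constant_on_def)
  moreover obtain k :: int where "D 0 = of_int (2 * k) * pi * \<i>"
    using exp_D[of 0] exp_eq[of "D 0" 0] by auto
  ultimately show thesis
    by (intro that[of k]) (simp add: D_def algebra_simps)
qed

lemma power_int_continuous_log_on_circle_imp_zero:
  fixes a :: int and \<phi> :: "complex \<Rightarrow> complex"
  assumes "continuous_on (sphere 0 1) \<phi>" "\<And>z. z \<in> sphere 0 1 \<Longrightarrow> z powi a = exp (\<phi> z)"
  shows "a = 0"
proof -
  define \<psi> where "\<psi> t = \<phi> (cis t) - \<i> * of_int a * of_real t" for t :: real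
  have "continuous_on UNIV \<psi>"
    unfolding \<psi>_def by (intro continuous_intros continuous_on_compose2[OF assms(1)]) auto
  moreover have "exp (\<psi> t) = 1" for t
  proof -
    have "exp (\<phi> (cis t)) = cis (of_int a * t)"
      using assms(2)[of "cis t"] by (simp add: cis_power_int)
    then show ?thesis
      by (simp add: \<psi>_def exp_diff cis_conv_exp mult_ac)
  qed
  ultimately have "\<psi> constant_on UNIV"
    by (intro continuous_exp_eq_1_imp_constant_on) auto
  then have "\<psi> (2 * pi) = \<psi> 0"
    by (auto simp: constant_on_def)
  then show ?thesis
    by (simp add: \<psi>_def)
qed

lemma continuous_on_through_compact_quotient:
  fixes q :: "'a::t2_space \<Rightarrow> 'b::t2_space"
  assumes "compact S" "continuous_on S q" "q ` S = T" "continuous_on S (f \<circ> q)"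
  shows "continuous_on T f"
  unfolding continuous_on_open
proof (intro allI impI)
  fix U assume "openin (top_of_set (f ` T)) U"
  moreover have "(f \<circ> q) ` S = f ` T"
    using assms(3) by (auto simp: image_comp)
  ultimately have "openin (top_of_set S) (S \<inter> (f \<circ> q) -` U)"
    using assms(4) unfolding continuous_on_open by metis
  moreover have "S \<inter> (f \<circ> q) -` U = S \<inter> q -` (T \<inter> f -` U)"
    using assms(3) by auto
  ultimately show "openin (top_of_set T) (T \<inter> f -` U)"
    using Abstract_Topology_2.continuous_imp_quotient_map[OF assms(2,3,1), of "T \<inter> f -` U"]
    by auto
qed

lemma cis_eq_cisE:
  assumes "cis s = cis t"
  obtains k :: int where "s = t + of_int k * (2 * pi)"
proof -
  have "cis (s - t) = 1"
    using assms by (simp flip: cis_divide)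
  then have "cos (s - t) = 1"
    by (simp add: complex_eq_iff)
  then obtain k :: int where "s - t = of_int k * 2 * pi"
    by (auto simp: cos_one_2pi_int)
  then show thesis
    by (intro that[of k]) (simp add: algebra_simps)
qed

lemma periodic_plus_of_int:
  fixes f :: "'a::ring_1 \<Rightarrow> 'b"
  assumes "\<And>x. f (x + p) = f x"
  shows "f (x + of_int k * p) = f x"
proof -
  interpret periodic_fun_simple f p
    by standard (rule assms)
  show ?thesis
    by (rule plus_of_int)
qed

lemma invertible_imp_det_dvd_1:
  fixes A :: "'a::comm_ring_1^'n^'n"
  assumes "invertible A"
  shows "det A dvd 1"
proof -
  obtain A' where "A ** A' = mat 1"
    using assms by (auto simp: invertible_def)
  then have "det A * det A' = 1"
    by (simp flip: det_mul)
  then show ?thesis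
    by (rule dvdI[OF sym])
qed

section \<open>Degrees of maps from the torus to the punctured plane\<close>

definition torus_char :: "int^3 \<Rightarrow> complex \<times> complex \<times> complex \<Rightarrow> complex" where
  "torus_char v = (\<lambda>(z1, z2, z3). z1 powi v$1 * z2 powi v$2 * z3 powi v$3)"

text \<open>\<open>has_degree u v\<close>: \<open>u\<close> is homotopic to the character \<open>torus_char v\<close> as a map into \<open>\<complex> - {0}\<close>.\<close>

definition has_degree :: "(complex \<times> complex \<times> complex \<Rightarrow> complex) \<Rightarrow> int^3 \<Rightarrow> bool" where
  "has_degree u v \<longleftrightarrow>
     (\<exists>f. continuous_on torus3 f \<and> (\<forall>x\<in>torus3. u x = torus_char v x * exp (f x)))"

lemma torus3_nonzero: "(z1, z2, z3) \<in> torus3 \<Longrightarrow> z1 \<noteq> 0 \<and> z2 \<noteq> 0 \<and> z3 \<noteq> 0"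
  by (auto simp: torus3_def)

lemma torus_char_nonzero: "x \<in> torus3 \<Longrightarrow> torus_char v x \<noteq> 0"
  by (auto simp: torus3_def torus_char_def)

lemma torus_char_add: "x \<in> torus3 \<Longrightarrow> torus_char (v + w) x = torus_char v x * torus_char w x"
  by (cases x) (auto dest!: torus3_nonzero simp: torus_char_def power_int_add mult_ac)

lemma torus_char_power_int: "torus_char v x powi k = torus_char (k *s v) x"
  by (auto simp: torus_char_def power_int_mult_distrib power_int_mult mult.commute[of k]
      split: prod.splits)

lemma has_degree_torus_char: "has_degree (torus_char v) v"
  unfolding has_degree_def by (intro exI[of _ "\<lambda>_. 0"]) auto

lemma has_degree_const: "c \<noteq> 0 \<Longrightarrow> has_degree (\<lambda>_. c) 0"
  unfolding has_degree_def by (intro exI[of _ "\<lambda>_. Ln c"]) (auto simp: torus_char_def)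

lemma has_degree_exp: "continuous_on torus3 f \<Longrightarrow> has_degree (\<lambda>x. exp (f x)) 0"
  unfolding has_degree_def by (intro exI[of _ f]) (simp add: torus_char_def)

lemma has_degree_cong: "has_degree u v \<Longrightarrow> (\<And>x. x \<in> torus3 \<Longrightarrow> u x = w x) \<Longrightarrow> has_degree w v"
  unfolding has_degree_def by auto

lemma has_degree_mult:
  assumes "has_degree u v" "has_degree w v'"
  shows "has_degree (\<lambda>x. u x * w x) (v + v')"
proof -
  obtain f f' where "continuous_on torus3 f" "\<forall>x\<in>torus3. u x = torus_char v x * exp (f x)"
    "continuous_on torus3 f'" "\<forall>x\<in>torus3. w x = torus_char v' x * exp (f' x)"
    using assms unfolding has_degree_def by blast
  then show ?thesis
    unfolding has_degree_def
    by (intro exI[of _ "\<lambda>x. f x + f' x"]) (auto intro!: continuous_intros simp: torus_char_add exp_add)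
qed

lemma has_degree_power_int:
  assumes "has_degree u v"
  shows "has_degree (\<lambda>x. u x powi k) (k *s v)"
proof -
  obtain f where "continuous_on torus3 f" "\<forall>x\<in>torus3. u x = torus_char v x * exp (f x)"
    using assms unfolding has_degree_def by blast
  then show ?thesis
    unfolding has_degree_def
    by (intro exI[of _ "\<lambda>x. of_int k * f x"])
      (auto intro!: continuous_intros simp: power_int_mult_distrib torus_char_power_int exp_power_int)
qed

lemma torus_char_continuous_log_imp_zero:
  assumes "continuous_on torus3 f" "\<And>x. x \<in> torus3 \<Longrightarrow> torus_char v x = exp (f x)"
  shows "v = 0"
proof -
  have exponent_zero: "a = 0"
    if \<iota>: "continuous_on (sphere 0 1) \<iota>" "\<iota> ` sphere 0 1 \<subseteq> torus3"
      and char_\<iota>: "\<And>z. torus_char v (\<iota> z) = z powi a" for \<iota> a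
  proof (rule power_int_continuous_log_on_circle_imp_zero)
    show "continuous_on (sphere 0 1) (\<lambda>z. f (\<iota> z))"
      by (rule continuous_on_compose2[OF assms(1) \<iota>])
    show "z powi a = exp (f (\<iota> z))" if "z \<in> sphere 0 1" for z
      using \<iota>(2) that assms(2)[of "\<iota> z"] char_\<iota>[of z] by (simp add: image_subset_iff)
  qed
  have circle_subset: "(\<lambda>z. (z, 1, 1)) ` sphere 0 1 \<subseteq> torus3"
    "(\<lambda>z. (1, z, 1)) ` sphere 0 1 \<subseteq> torus3" "(\<lambda>z. (1, 1, z)) ` sphere 0 1 \<subseteq> torus3"
    by (auto simp: torus3_def)
  have "v$1 = 0"
    by (rule exponent_zero[OF _ circle_subset(1)]) (intro continuous_intros, simp add: torus_char_def)
  moreover have "v$2 = 0"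
    by (rule exponent_zero[OF _ circle_subset(2)]) (intro continuous_intros, simp add: torus_char_def)
  moreover have "v$3 = 0"
    by (rule exponent_zero[OF _ circle_subset(3)]) (intro continuous_intros, simp add: torus_char_def)
  ultimately show ?thesis
    by (simp add: vec_eq_iff forall_3)
qed

lemma has_degree_unique:
  assumes "has_degree u v" "has_degree u w"
  shows "v = w"
proof -
  obtain f f' where f: "continuous_on torus3 f" "\<forall>x\<in>torus3. u x = torus_char v x * exp (f x)"
    and f': "continuous_on torus3 f'" "\<forall>x\<in>torus3. u x = torus_char w x * exp (f' x)"
    using assms unfolding has_degree_def by blast
  have "torus_char (v - w) x = exp (f' x - f x)" if x: "x \<in> torus3" for x
  proof -
    have "torus_char (v - w) x * torus_char w x * exp (f x) = torus_char w x * exp (f' x)"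
      using f(2) f'(2) x torus_char_add[OF x, of "v - w" w] by simp
    then show ?thesis
      using torus_char_nonzero[OF x, of w] by (simp add: exp_diff field_simps)
  qed
  then have "v - w = 0"
    by (intro torus_char_continuous_log_imp_zero[of "\<lambda>x. f' x - f x"] continuous_intros f f')
  then show ?thesis
    by simp
qed

section \<open>Existence of degrees\<close>

definition torus_cis :: "real \<times> real \<times> real \<Rightarrow> complex \<times> complex \<times> complex" where
  "torus_cis = (\<lambda>(t1, t2, t3). (cis t1, cis t2, cis t3))"

lemma continuous_on_torus_cis: "continuous_on S torus_cis"
  unfolding torus_cis_def split_beta by (intro continuous_intros)

lemma torus_cis_in_torus3: "torus_cis t \<in> torus3"
  by (auto simp: torus_cis_def torus3_def split: prod.splits)

lemma torus_cis_periodic: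
  "torus_cis (t + (2 * pi, 0, 0)) = torus_cis t" "torus_cis (t + (0, 2 * pi, 0)) = torus_cis t"
  "torus_cis (t + (0, 0, 2 * pi)) = torus_cis t"
  by (simp_all add: torus_cis_def split_beta flip: cis_mult)

lemma torus_cis_cube: "torus_cis ` ({-pi..pi} \<times> {-pi..pi} \<times> {-pi..pi}) = torus3"
proof (intro equalityI subsetI)
  have cis_Arg_unit: "cis (Arg z) = z" if "cmod z = 1" for z
  proof -
    have "z \<noteq> 0"
      using that by auto
    then show ?thesis
      using that by (simp add: cis_Arg sgn_div_norm)
  qed
  fix w assume "w \<in> torus3"
  then obtain z1 z2 z3 where w: "w = (z1, z2, z3)" "cmod z1 = 1" "cmod z2 = 1" "cmod z3 = 1"
    by (auto simp: torus3_def)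
  then have "w = torus_cis (Arg z1, Arg z2, Arg z3)"
    by (simp add: torus_cis_def cis_Arg_unit)
  moreover have "(Arg z1, Arg z2, Arg z3) \<in> {-pi..pi} \<times> {-pi..pi} \<times> {-pi..pi}"
    using Arg_bounded by (auto simp: less_imp_le)
  ultimately show "w \<in> torus_cis ` ({-pi..pi} \<times> {-pi..pi} \<times> {-pi..pi})"
    by blast
qed (auto intro: torus_cis_in_torus3)

lemma torus_char_torus_cis:
  "torus_char v (torus_cis (t1, t2, t3)) = cis (of_int (v$1) * t1 + of_int (v$2) * t2 + of_int (v$3) * t3)"
  by (simp add: torus_char_def torus_cis_def cis_power_int cis_mult)

lemma torus_cis_eq_imp_periodic_eq:
  assumes "\<And>x y z. G (x + 2 * pi, y, z) = G (x, y, z)" "\<And>x y z. G (x, y + 2 * pi, z) = G (x, y, z)"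
    "\<And>x y z. G (x, y, z + 2 * pi) = G (x, y, z)" and "torus_cis s = torus_cis t"
  shows "G s = G t"
proof -
  have shift: "G (x + of_int k1 * (2 * pi), y + of_int k2 * (2 * pi), z + of_int k3 * (2 * pi)) = G (x, y, z)"
    for x y z and k1 k2 k3 :: int
    using periodic_plus_of_int[of "\<lambda>x. G (x, _, _)", OF assms(1)]
      periodic_plus_of_int[of "\<lambda>y. G (_, y, _)", OF assms(2)]
      periodic_plus_of_int[of "\<lambda>z. G (_, _, z)", OF assms(3)] by simp
  obtain s1 s2 s3 t1 t2 t3 where st: "s = (s1, s2, s3)" "t = (t1, t2, t3)"
    by (cases s, cases t) auto
  then have "cis s1 = cis t1" "cis s2 = cis t2" "cis s3 = cis t3"
    using assms(4) by (simp_all add: torus_cis_def)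
  then obtain k1 k2 k3 :: int where
    "s1 = t1 + of_int k1 * (2 * pi)" "s2 = t2 + of_int k2 * (2 * pi)" "s3 = t3 + of_int k3 * (2 * pi)"
    by (metis cis_eq_cisE)
  then show ?thesis
    by (simp add: st shift)
qed

lemma has_degree_if_periodic_lift:
  assumes "continuous_on UNIV G"
    and "\<And>x y z. G (x + 2 * pi, y, z) = G (x, y, z)" "\<And>x y z. G (x, y + 2 * pi, z) = G (x, y, z)"
      "\<And>x y z. G (x, y, z + 2 * pi) = G (x, y, z)"
    and "\<And>t. u (torus_cis t) = torus_char v (torus_cis t) * exp (G t)"
  shows "has_degree u v"
proof -
  define L where "L = G \<circ> inv torus_cis"
  have L_torus_cis: "L (torus_cis t) = G t" for t
  proof -
    have "torus_cis (inv torus_cis (torus_cis t)) = torus_cis t"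
      by (rule f_inv_into_f) (rule rangeI)
    then show ?thesis
      unfolding L_def comp_def by (rule torus_cis_eq_imp_periodic_eq[OF assms(2-4)])
  qed
  \<comment> \<open>\<open>torus_cis\<close> restricted to the compact cube is a quotient map onto the torus.\<close>
  have "continuous_on torus3 L"
  proof (rule continuous_on_through_compact_quotient[OF _ continuous_on_torus_cis torus_cis_cube])
    show "compact ({-pi..pi} \<times> {-pi..pi} \<times> {-pi..pi})"
      by (intro compact_Times compact_Icc)
    show "continuous_on ({-pi..pi} \<times> {-pi..pi} \<times> {-pi..pi}) (L \<circ> torus_cis)"
      using continuous_on_subset[OF assms(1)] by (simp add: comp_def L_torus_cis)
  qed
  moreover have "u w = torus_char v w * exp (L w)" if "w \<in> torus3" for w
  proof -
    have "w \<in> torus_cis ` ({-pi..pi} \<times> {-pi..pi} \<times> {-pi..pi})"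
      using that by (simp only: torus_cis_cube)
    then obtain t where "w = torus_cis t"
      by blast
    then show ?thesis
      by (simp add: assms(5) L_torus_cis)
  qed
  ultimately show ?thesis
    unfolding has_degree_def by blast
qed

lemma has_degree_exists:
  assumes "continuous_on torus3 u" "\<And>x. x \<in> torus3 \<Longrightarrow> u x \<noteq> 0"
  obtains v where "has_degree u v"
proof -
  have "continuous_on UNIV (\<lambda>t. u (torus_cis t))"
    by (rule continuous_on_compose2[OF assms(1) continuous_on_torus_cis]) (auto intro: torus_cis_in_torus3)
  from continuous_logarithm_on_contractible[OF this contractible_UNIV]
  obtain F where F: "continuous_on UNIV F" "\<And>t. u (torus_cis t) = exp (F t)"
    using assms(2) torus_cis_in_torus3 by (metis UNIV_I)
  have exp_F_periodic: "exp (F (t + p)) = exp (F t)" if "\<And>t. torus_cis (t + p) = torus_cis t" for t p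
    using that by (simp flip: F(2))
  obtain k1 :: int where k1: "\<And>t. F (t + (2 * pi, 0, 0)) = F t + 2 * pi * \<i> * of_int k1"
    using exp_periodic_imp_shift_integer[OF F(1) exp_F_periodic[OF torus_cis_periodic(1)]] by blast
  obtain k2 :: int where k2: "\<And>t. F (t + (0, 2 * pi, 0)) = F t + 2 * pi * \<i> * of_int k2"
    using exp_periodic_imp_shift_integer[OF F(1) exp_F_periodic[OF torus_cis_periodic(2)]] by blast
  obtain k3 :: int where k3: "\<And>t. F (t + (0, 0, 2 * pi)) = F t + 2 * pi * \<i> * of_int k3"
    using exp_periodic_imp_shift_integer[OF F(1) exp_F_periodic[OF torus_cis_periodic(3)]] by blast
  define G where "G t = F t - \<i> * of_real (of_int k1 * fst t + of_int k2 * fst (snd t) + of_int k3 * snd (snd t))"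
    for t
  have "has_degree u (vector [k1, k2, k3])"
  proof (rule has_degree_if_periodic_lift)
    show "continuous_on UNIV G"
      unfolding G_def by (intro continuous_intros F(1))
    show "G (x + 2 * pi, y, z) = G (x, y, z)" for x y z
      using k1[of "(x, y, z)"] by (simp add: G_def field_simps)
    show "G (x, y + 2 * pi, z) = G (x, y, z)" for x y z
      using k2[of "(x, y, z)"] by (simp add: G_def field_simps)
    show "G (x, y, z + 2 * pi) = G (x, y, z)" for x y z
      using k3[of "(x, y, z)"] by (simp add: G_def field_simps)
    show "u (torus_cis t) = torus_char (vector [k1, k2, k3]) (torus_cis t) * exp (G t)" for t
      by (cases t) (simp add: F(2) G_def torus_char_torus_cis cis_conv_exp exp_diff)
  qed
  then show thesis
    by (rule that)
qed

section \<open>Degree matrices of self-maps of the torus\<close>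

text \<open>The matrix of the pull-back \<open>g\<^sup>*\<close> on \<open>H^1(T^3) = \<int>^3\<close>, acting on row vectors; its rows are the
  degrees of the coordinates of \<open>g\<close>.\<close>

definition has_degree_matrix ::
    "(complex \<times> complex \<times> complex \<Rightarrow> complex \<times> complex \<times> complex) \<Rightarrow> int^3^3 \<Rightarrow> bool" where
  "has_degree_matrix g P \<longleftrightarrow> continuous_on torus3 g \<and> g ` torus3 \<subseteq> torus3 \<and>
     (\<forall>v. has_degree (torus_char v \<circ> g) (v v* P))"

lemma has_degree_compose:
  assumes "has_degree u v" "has_degree_matrix g P"
  shows "has_degree (u \<circ> g) (v v* P)"
proof -
  obtain f where f: "continuous_on torus3 f" "\<forall>x\<in>torus3. u x = torus_char v x * exp (f x)"
    using assms(1) unfolding has_degree_def by blast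
  have g: "continuous_on torus3 g" "g ` torus3 \<subseteq> torus3" "has_degree (torus_char v \<circ> g) (v v* P)"
    using assms(2) unfolding has_degree_matrix_def by blast+
  have "has_degree (\<lambda>x. (torus_char v \<circ> g) x * exp (f (g x))) (v v* P + 0)"
    by (intro has_degree_mult g(3) has_degree_exp continuous_on_compose2[OF f(1) g(1,2)])
  then have "has_degree (\<lambda>x. (torus_char v \<circ> g) x * exp (f (g x))) (v v* P)"
    by simp
  then show ?thesis
    by (rule has_degree_cong) (use f(2) g(2) in auto)
qed

lemma has_degree_matrix_unique:
  assumes "has_degree_matrix g P" "has_degree_matrix g Q"
  shows "P = Q"
proof -
  have "v v* P = v v* Q" for v
    using assms by (auto simp: has_degree_matrix_def intro: has_degree_unique)
  then have "transpose P = transpose Q"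
    by (simp add: matrix_eq)
  then show ?thesis
    by (metis transpose_transpose)
qed

lemma has_degree_matrix_cong:
  assumes "has_degree_matrix g P" "\<And>x. x \<in> torus3 \<Longrightarrow> g x = g' x"
  shows "has_degree_matrix g' P"
  unfolding has_degree_matrix_def
proof (intro conjI allI)
  show "continuous_on torus3 g'" "g' ` torus3 \<subseteq> torus3"
    using assms continuous_on_cong[of torus3 torus3 g g'] by (auto simp: has_degree_matrix_def)
  show "has_degree (torus_char v \<circ> g') (v v* P)" for v
    using assms(1) by (auto simp: has_degree_matrix_def assms(2) intro: has_degree_cong)
qed

lemma has_degree_matrix_id: "has_degree_matrix id (mat 1)"
  by (simp add: has_degree_matrix_def has_degree_torus_char)

lemma has_degree_matrix_compose:
  assumes "has_degree_matrix g P" "has_degree_matrix f Q"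
  shows "has_degree_matrix (g \<circ> f) (P ** Q)"
proof -
  have "continuous_on torus3 (g \<circ> f)" "(g \<circ> f) ` torus3 \<subseteq> torus3"
    using assms continuous_on_compose[of torus3 f g] continuous_on_subset[of torus3 g "f ` torus3"]
    unfolding has_degree_matrix_def by (auto simp: image_subset_iff)
  moreover have "has_degree (torus_char v \<circ> (g \<circ> f)) (v v* (P ** Q))" for v
    using has_degree_compose[OF _ assms(2), of "torus_char v \<circ> g" "v v* P"] assms(1)
    by (simp add: has_degree_matrix_def comp_assoc vector_matrix_mul_assoc)
  ultimately show ?thesis
    unfolding has_degree_matrix_def by blast
qed

lemma has_degree_matrix_exists:
  assumes "continuous_on torus3 g" "g ` torus3 \<subseteq> torus3"
  obtains P where "has_degree_matrix g P"
proof -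
  have coordinate_nonzero: "fst (g x) \<noteq> 0" "fst (snd (g x)) \<noteq> 0" "snd (snd (g x)) \<noteq> 0"
    if "x \<in> torus3" for x
    using assms(2) that torus3_nonzero[of "fst (g x)" "fst (snd (g x))" "snd (snd (g x))"] by auto
  obtain p1 where p1: "has_degree (\<lambda>x. fst (g x)) p1"
    using has_degree_exists[of "\<lambda>x. fst (g x)"] assms(1) coordinate_nonzero(1)
    by (metis continuous_on_fst)
  obtain p2 where p2: "has_degree (\<lambda>x. fst (snd (g x))) p2"
    using has_degree_exists[of "\<lambda>x. fst (snd (g x))"] assms(1) coordinate_nonzero(2)
    by (metis continuous_on_fst continuous_on_snd)
  obtain p3 where p3: "has_degree (\<lambda>x. snd (snd (g x))) p3"
    using has_degree_exists[of "\<lambda>x. snd (snd (g x))"] assms(1) coordinate_nonzero(3)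
    by (metis continuous_on_snd)
  have "has_degree (torus_char v \<circ> g) (v v* vector [p1, p2, p3])" for v
  proof -
    have "has_degree (\<lambda>x. fst (g x) powi v$1 * fst (snd (g x)) powi v$2 * snd (snd (g x)) powi v$3)
        (v$1 *s p1 + v$2 *s p2 + v$3 *s p3)"
      by (intro has_degree_mult has_degree_power_int p1 p2 p3)
    moreover have "v$1 *s p1 + v$2 *s p2 + v$3 *s p3 = v v* vector [p1, p2, p3]"
      by (simp add: vec_eq_iff forall_3 vector_matrix_mult_def sum_3 mult.commute)
    ultimately show ?thesis
      by (simp add: torus_char_def comp_def split_beta)
  qed
  then show thesis
    using assms by (intro that[of "vector [p1, p2, p3]"]) (simp add: has_degree_matrix_def)
qed

section \<open>The skew products\<close>

definition skew_matrix :: "int \<Rightarrow> int \<Rightarrow> int^3^3" where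
  "skew_matrix a b = vector [vector [1, 0, 0], vector [a, 1, 0], vector [0, b, 1]]"

lemma invertible_lower_triangular_diagonal:
  fixes G :: "int^3^3"
  assumes "invertible G" "G$1$2 = 0" "G$1$3 = 0" "G$2$3 = 0"
  shows "\<bar>G$1$1\<bar> = 1" "\<bar>G$2$2\<bar> = 1"
proof -
  have "det G = G$1$1 * G$2$2 * G$3$3"
    using assms(2-4) by (simp add: det_3)
  then have "\<bar>G$1$1 * G$2$2 * G$3$3\<bar> = 1"
    using invertible_imp_det_dvd_1[OF assms(1)] by simp
  then have "\<bar>G$1$1 * G$2$2\<bar> = 1"
    by (rule abs_zmult_eq_1)
  then show "\<bar>G$1$1\<bar> = 1" "\<bar>G$2$2\<bar> = 1"
    using abs_zmult_eq_1[of "G$1$1" "G$2$2"] abs_zmult_eq_1[of "G$2$2" "G$1$1"] by (simp_all add: mult.commute)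
qed

lemma skew_matrix_not_similar:
  assumes "invertible G" "0 < m" "m < n"
  shows "G ** skew_matrix m n \<noteq> skew_matrix n m ** G"
proof
  assume "G ** skew_matrix m n = skew_matrix n m ** G"
  then have zeros: "G$1$2 = 0" "G$1$3 = 0" "G$2$3 = 0" and "m * G$2$2 = n * G$1$1"
    using assms(2,3)
    by (auto simp: skew_matrix_def vec_eq_iff forall_3 matrix_matrix_mult_def sum_3 algebra_simps)
  then have "\<bar>m * G$2$2\<bar> = \<bar>n * G$1$1\<bar>"
    by simp
  then have "\<bar>m\<bar> = \<bar>n\<bar>"
    using invertible_lower_triangular_diagonal[OF assms(1) zeros] by (simp add: abs_mult)
  then show False
    using assms(2,3) by simp
qed

lemma skew_matrix_not_flip_similar:
  assumes "invertible G" "0 < m" "m < n"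
  shows "skew_matrix n m ** G ** skew_matrix m n \<noteq> G"
proof
  assume "skew_matrix n m ** G ** skew_matrix m n = G"
  then have zeros: "G$1$2 = 0" "G$1$3 = 0" "G$2$3 = 0" and "m * G$2$2 = - n * G$1$1"
    using assms(2,3)
    by (auto simp: skew_matrix_def vec_eq_iff forall_3 matrix_matrix_mult_def sum_3 algebra_simps)
  then have "\<bar>m * G$2$2\<bar> = \<bar>n * G$1$1\<bar>"
    by simp
  then have "\<bar>m\<bar> = \<bar>n\<bar>"
    using invertible_lower_triangular_diagonal[OF assms(1) zeros] by (simp add: abs_mult)
  then show False
    using assms(2,3) by simp
qed

lemma torus_char_skew3:
  assumes "x \<in> torus3"
  shows "torus_char v (skew3 \<theta> a b x) =
    exp (2 * pi * \<i> * complex_of_real \<theta>) powi v$1 * torus_char (v v* skew_matrix a b) x"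
  using assms
  by (cases x) (auto dest!: torus3_nonzero simp: skew3_def torus_char_def skew_matrix_def
      vector_matrix_mult_def sum_3 power_int_mult_distrib power_int_add power_int_mult mult_ac)

lemma skew3_in_torus3: "x \<in> torus3 \<Longrightarrow> skew3 \<theta> a b x \<in> torus3"
  by (auto simp: skew3_def torus3_def norm_mult norm_power_int)

lemma has_degree_matrix_skew3: "has_degree_matrix (skew3 \<theta> a b) (skew_matrix a b)"
  unfolding has_degree_matrix_def
proof (intro conjI allI)
  show "continuous_on torus3 (skew3 \<theta> a b)"
    unfolding skew3_def split_beta by (intro continuous_intros) (auto dest: torus3_nonzero)
  show "skew3 \<theta> a b ` torus3 \<subseteq> torus3"
    using skew3_in_torus3 by blast
  fix v
  have "has_degree (\<lambda>x. exp (2 * pi * \<i> * complex_of_real \<theta>) powi v$1 *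
      torus_char (v v* skew_matrix a b) x) (0 + v v* skew_matrix a b)"
    by (intro has_degree_mult has_degree_const has_degree_torus_char) simp
  then have "has_degree (\<lambda>x. exp (2 * pi * \<i> * complex_of_real \<theta>) powi v$1 *
      torus_char (v v* skew_matrix a b) x) (v v* skew_matrix a b)"
    by simp
  then show "has_degree (torus_char v \<circ> skew3 \<theta> a b) (v v* skew_matrix a b)"
    by (rule has_degree_cong) (simp add: torus_char_skew3)
qed

lemma skew3_image: "skew3 \<theta> a b ` torus3 = torus3"
proof (intro equalityI subsetI)
  fix w assume "w \<in> torus3"
  then obtain w1 w2 w3 where w: "w = (w1, w2, w3)" "cmod w1 = 1" "cmod w2 = 1" "cmod w3 = 1"
    by (auto simp: torus3_def)
  define c where "c = exp (2 * pi * \<i> * complex_of_real \<theta>)"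
  have "cmod c = 1"
    by (simp add: c_def mult.commute[of _ \<i>] mult.assoc)
  define z1 where "z1 = w1 / c"
  define z2 where "z2 = w2 / z1 powi a"
  define z3 where "z3 = w3 / z2 powi b"
  have z: "cmod z1 = 1" "cmod z2 = 1" "cmod z3 = 1"
    using w \<open>cmod c = 1\<close> by (simp_all add: z1_def z2_def z3_def norm_divide norm_power_int)
  have "skew3 \<theta> a b (z1, z2, z3) = (c * z1, z1 powi a * z2, z2 powi b * z3)"
    by (simp add: skew3_def c_def)
  also have "\<dots> = w"
    using z \<open>cmod c = 1\<close> w by (auto simp: z1_def z2_def z3_def power_int_eq_0_iff)
  finally have "skew3 \<theta> a b (z1, z2, z3) = w" .
  moreover have "(z1, z2, z3) \<in> torus3"
    using z by (simp add: torus3_def)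
  ultimately show "w \<in> skew3 \<theta> a b ` torus3"
    by blast
qed (auto intro: skew3_in_torus3)

lemma homeomorphism_torus3_degree_matrices:
  assumes "homeomorphism torus3 torus3 g g'"
  obtains G G' where "has_degree_matrix g G" "has_degree_matrix g' G'" "G ** G' = mat 1" "G' ** G = mat 1"
proof -
  have g: "continuous_on torus3 g" "g ` torus3 = torus3" "\<And>x. x \<in> torus3 \<Longrightarrow> g' (g x) = x"
    and g': "continuous_on torus3 g'" "g' ` torus3 = torus3" "\<And>y. y \<in> torus3 \<Longrightarrow> g (g' y) = y"
    using assms by (auto simp: homeomorphism_def)
  obtain G G' where G: "has_degree_matrix g G" and G': "has_degree_matrix g' G'"
    using has_degree_matrix_exists g(1,2) g'(1,2) by (metis order_refl)
  have "has_degree_matrix (g \<circ> g') (mat 1)" "has_degree_matrix (g' \<circ> g) (mat 1)"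
    by (rule has_degree_matrix_cong[OF has_degree_matrix_id]; simp add: g(3) g'(3))+
  then have "G ** G' = mat 1" "G' ** G = mat 1"
    using has_degree_matrix_compose[OF G G'] has_degree_matrix_compose[OF G' G]
    by (auto intro: has_degree_matrix_unique)
  with G G' show thesis
    by (rule that)
qed

lemma conjugate_on_torus3_imp_similar:
  assumes "conjugate_on torus3 h torus3 k" "has_degree_matrix h H" "has_degree_matrix k K"
  obtains G where "invertible G" "G ** H = K ** G"
proof -
  obtain g g' where hom: "homeomorphism torus3 torus3 g g'" and conj: "\<forall>y\<in>torus3. g (h (g' y)) = k y"
    using assms(1) by (auto simp: conjugate_on_def)
  obtain G G' where G: "has_degree_matrix g G" "has_degree_matrix g' G'" "G ** G' = mat 1" "G' ** G = mat 1"
    using homeomorphism_torus3_degree_matrices[OF hom] by blast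
  have "has_degree_matrix (g \<circ> h \<circ> g') (G ** H ** G')"
    by (intro has_degree_matrix_compose G(1,2) assms(2))
  moreover have "has_degree_matrix (g \<circ> h \<circ> g') K"
    using assms(3) by (rule has_degree_matrix_cong) (simp add: conj)
  ultimately have "G ** H ** G' = K"
    by (rule has_degree_matrix_unique)
  then have "G ** H = K ** G"
    by (metis G(4) matrix_mul_assoc matrix_mul_rid)
  with G(3,4) show thesis
    by (intro that) (auto simp: invertible_def)
qed

lemma conjugate_on_torus3_inverse_imp_flip_similar:
  assumes "conjugate_on torus3 h torus3 (inv_into torus3 k)" "has_degree_matrix h H" "has_degree_matrix k K"
    and "k ` torus3 = torus3"
  obtains G where "invertible G" "K ** G ** H = G"
proof -
  obtain g g' where hom: "homeomorphism torus3 torus3 g g'"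
    and conj: "\<forall>y\<in>torus3. g (h (g' y)) = inv_into torus3 k y"
    using assms(1) by (auto simp: conjugate_on_def)
  obtain G G' where G: "has_degree_matrix g G" "has_degree_matrix g' G'" "G ** G' = mat 1" "G' ** G = mat 1"
    using homeomorphism_torus3_degree_matrices[OF hom] by blast
  have "has_degree_matrix (k \<circ> g \<circ> h \<circ> g') (K ** G ** H ** G')"
    by (intro has_degree_matrix_compose G(1,2) assms(2,3))
  moreover have "has_degree_matrix (k \<circ> g \<circ> h \<circ> g') (mat 1)"
    by (rule has_degree_matrix_cong[OF has_degree_matrix_id]) (simp add: conj f_inv_into_f assms(4))
  ultimately have "K ** G ** H ** G' = mat 1"
    by (rule has_degree_matrix_unique)
  then have "K ** G ** H = G"
    by (metis G(4) matrix_mul_assoc matrix_mul_lid matrix_mul_rid)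
  with G(3,4) show thesis
    by (intro that) (auto simp: invertible_def)
qed

theorem mainTheorem3:
  fixes \<theta> :: real and m n :: int
  assumes "0 \<le> \<theta>" "\<theta> \<le> 1" "\<theta> \<notin> \<rat>"
    and "0 < m" "m < n"
  shows "\<not> flip_conjugate_on torus3 (skew3 \<theta> m n) torus3 (skew3 \<theta> n m)"
proof
  assume "flip_conjugate_on torus3 (skew3 \<theta> m n) torus3 (skew3 \<theta> n m)"
  then consider (conj) "conjugate_on torus3 (skew3 \<theta> m n) torus3 (skew3 \<theta> n m)"
    | (flip) "conjugate_on torus3 (skew3 \<theta> m n) torus3 (inv_into torus3 (skew3 \<theta> n m))"
    unfolding flip_conjugate_on_def by blast
  then show False
  proof cases
    case conj
    then obtain G where "invertible G" "G ** skew_matrix m n = skew_matrix n m ** G"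
      by (rule conjugate_on_torus3_imp_similar[OF _ has_degree_matrix_skew3 has_degree_matrix_skew3])
    then show False
      using skew_matrix_not_similar assms(4,5) by blast
  next
    case flip
    then obtain G where "invertible G" "skew_matrix n m ** G ** skew_matrix m n = G"
      by (rule conjugate_on_torus3_inverse_imp_flip_similar[OF _ has_degree_matrix_skew3
            has_degree_matrix_skew3 skew3_image])
    then show False
      using skew_matrix_not_flip_similar assms(4,5) by blast
  qed
qed

end
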